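(* The structure $\mathbb{M}_0=(\{0,1,2\};\psi_2,\rho_2,\{0,1\},\{0\},\{1\},\{2\})$ pp-constructs $\mathbb{M}_0'=(\{0,1,2\};\psi_2,\rho_2,\tau_0,\tau_1,\{0,1\},\{0\},\{1\},\{2\})$, and $\mathbb{M}_0'$ pp-constructs $\mathbb{M}_0$.
   Context: $\psi_2=\{(0,1),(1,0),(2,2)\}$; $\mu_2$ is the equivalence relation on $\{0,1,2\}$ with classes $\{0,1\},\{2\}$ and $\rho_2=\{0,1,2\}^2\setminus\mu_2$; $\tau_0=\{(0,0),(1,0),(2,1)\}$; $\tau_1=\{(0,1),(1,1),(2,0)\}$. A relation is pp-definable in $\mathbb{A}$ if definable by a formula using the relations of $\mathbb{A}$, equality, conjunction and existential quantification. A pp-power of $\mathbb{A}$ is a structure isomorphic to one with domain $A^n$ whose $k$-ary relations, viewed as $kn$-ary relations on $A$, are pp-definable in $\mathbb{A}$. $\mathbb{A}$ pp-constructs $\mathbb{B}$ if $\mathbb{B}$ is homomorphically equivalent (homomorphisms in both directions) to a pp-power of $\mathbb{A}$. *)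

theory Defs
  imports Main
begin

type_synonym 'a rstruct = "'a set \<times> (nat \<times> 'a list set) list"

datatype ppf = PAtom nat "nat list" | PEq nat nat | PConj ppf ppf | PEx nat ppf

fun pp_sat :: "'a rstruct \<Rightarrow> ppf \<Rightarrow> (nat \<Rightarrow> 'a) \<Rightarrow> bool" where
  "pp_sat S (PAtom i xs) v =
     (i < length (snd S) \<and> length xs = fst (snd S ! i) \<and> map v xs \<in> snd (snd S ! i))"
| "pp_sat S (PEq x y) v = (v x = v y)"
| "pp_sat S (PConj p q) v = (pp_sat S p v \<and> pp_sat S q v)"
| "pp_sat S (PEx x p) v = (\<exists>a\<in>fst S. pp_sat S p (v(x := a)))"

definition pp_definable :: "'a rstruct \<Rightarrow> nat \<Rightarrow> 'a list set \<Rightarrow> bool" where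
  "pp_definable S k R \<longleftrightarrow>
     (\<exists>\<phi> xs. length xs = k \<and>
        R = {map v xs | v. (\<forall>y. v y \<in> fst S) \<and> pp_sat S \<phi> v})"

definition is_hom :: "('a \<Rightarrow> 'b) \<Rightarrow> 'a rstruct \<Rightarrow> 'b rstruct \<Rightarrow> bool" where
  "is_hom h A B \<longleftrightarrow>
     (\<forall>a\<in>fst A. h a \<in> fst B) \<and> length (snd A) = length (snd B) \<and>
     (\<forall>i<length (snd A). fst (snd A ! i) = fst (snd B ! i) \<and>
        (\<forall>t\<in>snd (snd A ! i). map h t \<in> snd (snd B ! i)))"

definition hom_equiv :: "'a rstruct \<Rightarrow> 'b rstruct \<Rightarrow> bool" where
  "hom_equiv A B \<longleftrightarrow> (\<exists>h. is_hom h A B) \<and> (\<exists>g. is_hom g B A)"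

definition pp_power :: "'a rstruct \<Rightarrow> nat \<Rightarrow> 'a list rstruct \<Rightarrow> bool" where
  "pp_power A n C \<longleftrightarrow> n \<ge> 1 \<and>
     fst C = {t. length t = n \<and> set t \<subseteq> fst A} \<and>
     (\<forall>i<length (snd C).
        snd (snd C ! i) \<subseteq> {t. length t = fst (snd C ! i) \<and> set t \<subseteq> fst C} \<and>
        pp_definable A (fst (snd C ! i) * n) (concat ` snd (snd C ! i)))"

text \<open>A pp-constructs B: B is homomorphically equivalent to a pp-power of A.
  (Isomorphic copies are irrelevant, as isomorphisms preserve homomorphic equivalence.)\<close>
definition pp_constructs :: "'a rstruct \<Rightarrow> 'b rstruct \<Rightarrow> bool" where
  "pp_constructs A B \<longleftrightarrow> (\<exists>n C. pp_power A n C \<and> hom_equiv B C)"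

definition D3 :: "nat set" where "D3 = {0, 1, 2}"

definition psi2 :: "nat list set" where "psi2 = {[0,1], [1,0], [2,2]}"
definition mu2 :: "nat list set" where
  "mu2 = {[a,b] | a b. a \<in> {0,1} \<and> b \<in> {0,1}} \<union> {[2,2]}"
definition rho2 :: "nat list set" where
  "rho2 = {[a,b] | a b. a \<in> D3 \<and> b \<in> D3} - mu2"
definition tau0 :: "nat list set" where "tau0 = {[0,0], [1,0], [2,1]}"
definition tau1 :: "nat list set" where "tau1 = {[0,1], [1,1], [2,0]}"

definition unrel :: "nat set \<Rightarrow> nat list set" where "unrel U = {[a] | a. a \<in> U}"

definition M0 :: "nat rstruct" where
  "M0 = (D3, [(2, psi2), (2, rho2), (1, unrel {0,1}), (1, unrel {0}), (1, unrel {1}),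
             (1, unrel {2})])"

definition M0' :: "nat rstruct" where
  "M0' = (D3, [(2, psi2), (2, rho2), (2, tau0), (2, tau1), (1, unrel {0,1}), (1, unrel {0}),
              (1, unrel {1}), (1, unrel {2})])"

end

(*
  M0 is a reduct of M0', so M0' pp-constructs M0 through its first pp-power.

  Conversely, M0' is homomorphically equivalent to a pp-power of M0 on triples. Call x low if
  x <> 2; rho2 relates exactly the low elements with 2. Besides its first entry, a triple
  (a, b, c) with a low carries a bit: 0 if b and c are both low, 1 if both are 2; enc stores
  0 and 1 as their own bits, and dec reads the bit whenever b and c agree. Since rho2
  transports lowness between coordinates, tau0 and tau1 become pp-definable by prescribing the
  bit of the second triple from the first entry of the first. For psi2 the last two coordinates
  are related crosswise by rho2: this flips the bit, and it holds for the pair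
  (enc 2, enc 2) = ((2,0,2), (2,0,2)) although rho2 is irreflexive.
*)

theory Submission
  imports Defs
begin

lemma pp_definable_subset:
  "pp_definable S k R \<Longrightarrow> R \<subseteq> {t. length t = k \<and> set t \<subseteq> fst S}"
  unfolding pp_definable_def by auto

lemma pp_definable_by_formula:
  assumes "d \<in> fst S" and "distinct xs" and "length xs = k"
    and "R \<subseteq> {t. length t = k \<and> set t \<subseteq> fst S}"
    and "\<And>v. \<forall>y. v y \<in> fst S \<Longrightarrow> pp_sat S \<phi> v \<longleftrightarrow> map v xs \<in> R"
  shows "pp_definable S k R"
  unfolding pp_definable_def
proof (intro exI conjI)
  show "R = {map v xs | v. (\<forall>y. v y \<in> fst S) \<and> pp_sat S \<phi> v}"
  proof (intro equalityI subsetI)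
    fix t assume "t \<in> R"
    define v where "v i = (case map_of (zip xs t) i of None \<Rightarrow> d | Some a \<Rightarrow> a)" for i
    have t: "length t = length xs" "set t \<subseteq> fst S" using \<open>t \<in> R\<close> assms(3,4) by auto
    then have "map v xs = t"
      using assms(2) by (auto simp: v_def map_of_zip_nth intro: nth_equalityI)
    moreover have "\<forall>y. v y \<in> fst S"
      using t assms(1) by (auto simp: v_def split: option.split dest!: map_of_SomeD set_zip_rightD)
    moreover from calculation \<open>t \<in> R\<close> have "pp_sat S \<phi> v" using assms(5) by simp
    ultimately show "t \<in> {map v xs | v. (\<forall>y. v y \<in> fst S) \<and> pp_sat S \<phi> v}"
      by blast
  qed (use assms(5) in blast)
qed (rule assms(3))

lemma pp_definable_atom:
  assumes "(k, R) \<in> set (snd S)" and "R \<subseteq> {t. length t = k \<and> set t \<subseteq> fst S}" and "d \<in> fst S"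
  shows "pp_definable S k R"
proof -
  obtain j where "j < length (snd S)" "snd S ! j = (k, R)"
    using assms(1) by (meson in_set_conv_nth)
  then show ?thesis
    by (intro pp_definable_by_formula[where d = d and xs = "[0..<k]" and \<phi> = "PAtom j [0..<k]"]
        assms(2,3)) simp_all
qed

definition unconcat :: "nat \<Rightarrow> nat \<Rightarrow> 'a list set \<Rightarrow> 'a list list set" where
  "unconcat n k R = {ts. length ts = k \<and> (\<forall>t\<in>set ts. length t = n) \<and> concat ts \<in> R}"

definition pp_power_of :: "'a rstruct \<Rightarrow> nat \<Rightarrow> (nat \<times> 'a list set) list \<Rightarrow> 'a list rstruct" where
  "pp_power_of A n rels =
     ({t. length t = n \<and> set t \<subseteq> fst A}, map (\<lambda>(k, R). (k, unconcat n k R)) rels)"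

lemma length_eq_2_iff: "length t = 2 \<longleftrightarrow> (\<exists>a b. t = [a,b])"
  by (auto simp: numeral_2_eq_2 length_Suc_conv)

lemma length_eq_3_iff: "length t = 3 \<longleftrightarrow> (\<exists>a b c. t = [a,b,c])"
  by (auto simp: numeral_3_eq_3 length_Suc_conv)

lemma unconcat_3_1: "unconcat 3 1 R = {[[a,b,c]] | a b c. [a,b,c] \<in> R}"
  unfolding unconcat_def by (auto simp: length_eq_3_iff length_Suc_conv)

lemma unconcat_3_2: "unconcat 3 2 R = {[[a,b,c],[d,e,f]] | a b c d e f. [a,b,c,d,e,f] \<in> R}"
  unfolding unconcat_def by (auto simp: length_eq_3_iff length_eq_2_iff)

lemma concat_unconcat_exists:
  "length t = k * n \<Longrightarrow> \<exists>ts. length ts = k \<and> (\<forall>s\<in>set ts. length s = n) \<and> concat ts = t"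
proof (induction k arbitrary: t)
  case 0
  then show ?case by simp
next
  case (Suc k)
  then obtain ts where "length ts = k" "\<forall>s\<in>set ts. length s = n" "concat ts = drop n t"
    by (metis diff_add_inverse length_drop mult_Suc)
  with Suc.prems show ?case
    by (intro exI[of _ "take n t # ts"]) auto
qed

lemma concat_image_unconcat:
  assumes "R \<subseteq> {t. length t = k * n}"
  shows "concat ` unconcat n k R = R"
proof
  show "concat ` unconcat n k R \<subseteq> R"
    unfolding unconcat_def by auto
  show "R \<subseteq> concat ` unconcat n k R"
  proof
    fix t assume "t \<in> R"
    with assms obtain ts where "length ts = k" "\<forall>s\<in>set ts. length s = n" "concat ts = t"
      using concat_unconcat_exists by blast
    with \<open>t \<in> R\<close> show "t \<in> concat ` unconcat n k R"
      unfolding unconcat_def by force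
  qed
qed

lemma map_in_unconcat_iff:
  assumes "\<And>x. length (h x) = n"
  shows "map h t \<in> unconcat n k R \<longleftrightarrow> length t = k \<and> concat (map h t) \<in> R"
  unfolding unconcat_def using assms by simp

lemma map_hd_unconcat_1:
  assumes "ts \<in> unconcat 1 k R"
  shows "map hd ts \<in> R"
proof -
  have "\<forall>t\<in>set ts. length t = 1" using assms unfolding unconcat_def by simp
  then have "concat ts = map hd ts"
    by (induction ts) (auto simp: length_Suc_conv)
  with assms show ?thesis unfolding unconcat_def by simp
qed

lemma pp_power_iff:
  "pp_power A n C \<longleftrightarrow> n \<ge> 1 \<and> fst C = {t. length t = n \<and> set t \<subseteq> fst A} \<and>
     (\<forall>(k, R)\<in>set (snd C). R \<subseteq> {t. length t = k \<and> set t \<subseteq> fst C} \<and>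
        pp_definable A (k * n) (concat ` R))"
  unfolding pp_power_def by (simp add: all_set_conv_all_nth case_prod_beta)

lemma pp_power_pp_power_of:
  assumes "n \<ge> 1" and "\<forall>(k, R)\<in>set rels. pp_definable A (k * n) R"
  shows "pp_power A n (pp_power_of A n rels)"
  unfolding pp_power_iff
proof (intro conjI ballI)
  fix kU assume "kU \<in> set (snd (pp_power_of A n rels))"
  then obtain k R where kU: "kU = (k, unconcat n k R)" and "(k, R) \<in> set rels"
    unfolding pp_power_of_def by auto
  then have def: "pp_definable A (k * n) R" using assms(2) by auto
  then have R: "R \<subseteq> {t. length t = k * n \<and> set t \<subseteq> fst A}"
    by (rule pp_definable_subset)
  have "unconcat n k R \<subseteq> {ts. length ts = k \<and> set ts \<subseteq> fst (pp_power_of A n rels)}"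
    using R unfolding unconcat_def pp_power_of_def by fastforce
  moreover have "concat ` unconcat n k R = R"
    using R by (intro concat_image_unconcat) auto
  ultimately show "case kU of (k, R) \<Rightarrow> R \<subseteq> {t. length t = k \<and> set t \<subseteq> fst (pp_power_of A n rels)} \<and>
        pp_definable A (k * n) (concat ` R)"
    using def kU by simp
qed (use assms in \<open>simp_all add: pp_power_of_def\<close>)

lemma is_hom_iff_list_all2:
  "is_hom h A B \<longleftrightarrow> (\<forall>a\<in>fst A. h a \<in> fst B) \<and>
     list_all2 (\<lambda>(k, R) (k', R'). k = k' \<and> (\<forall>t\<in>R. map h t \<in> R')) (snd A) (snd B)"
  unfolding is_hom_def list_all2_conv_all_nth by (auto simp: case_prod_beta)

lemma pp_constructs_via_pp_power_of:
  assumes "n \<ge> 1" and "\<forall>(k, R)\<in>set rels. pp_definable A (k * n) R"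
    and "is_hom h B (pp_power_of A n rels)" and "is_hom g (pp_power_of A n rels) B"
  shows "pp_constructs A B"
  unfolding pp_constructs_def hom_equiv_def
  using pp_power_pp_power_of[OF assms(1,2)] assms(3,4) by blast

lemma pp_constructs_if_pp_definable:
  assumes "fst B = fst A" and "\<forall>(k, R)\<in>set (snd B). pp_definable A k R"
  shows "pp_constructs A B"
proof (rule pp_constructs_via_pp_power_of[where n = 1 and rels = "snd B"])
  have "length t = k" if "(k, R) \<in> set (snd B)" "t \<in> R" for k R t
    using that assms(2) pp_definable_subset by fastforce
  then show "is_hom (\<lambda>a. [a]) B (pp_power_of A 1 (snd B))"
    using assms(1) unfolding is_hom_iff_list_all2 pp_power_of_def
    by (auto simp: list.rel_map list_all2_same map_in_unconcat_iff)
  show "is_hom hd (pp_power_of A 1 (snd B)) B"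
    using assms(1) unfolding is_hom_iff_list_all2 pp_power_of_def
    by (auto simp: list.rel_map list_all2_same map_hd_unconcat_1 length_Suc_conv)
qed (use assms(2) in auto)

lemma fst_M0: "fst M0 = D3"
  by (simp add: M0_def)

lemma D3_members: "0 \<in> D3" "1 \<in> D3" "2 \<in> D3"
  by (simp_all add: D3_def)

lemma rho2_eq: "rho2 = {[0,2], [1,2], [2,0], [2,1]}"
  unfolding rho2_def mu2_def D3_def by auto

lemma rho2_iff: "[x, y] \<in> rho2 \<longleftrightarrow> x \<in> D3 \<and> y \<in> D3 \<and> (x = 2 \<longleftrightarrow> y \<noteq> 2)"
  unfolding rho2_eq D3_def by auto

lemma rho2_rho2_iff:
  assumes "x \<in> D3" and "y \<in> D3"
  shows "(\<exists>z\<in>D3. [x, z] \<in> rho2 \<and> [z, y] \<in> rho2) \<longleftrightarrow> (x = 2 \<longleftrightarrow> y = 2)"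
  using assms unfolding rho2_iff D3_def by auto

lemma singleton_in_unrel_iff: "[x] \<in> unrel U \<longleftrightarrow> x \<in> U"
  by (simp add: unrel_def)

lemma unrel_singleton: "unrel {x} = {[x]}"
  by (simp add: unrel_def)

definition enc :: "nat \<Rightarrow> nat list" where
  "enc x = (if x = 0 then [0,0,0] else if x = 1 then [1,2,2] else [2,0,2])"

definition dec :: "nat list \<Rightarrow> nat" where
  "dec t = (if t ! 0 = 2 then 2
            else if t ! 1 = 2 \<and> t ! 2 = 2 then 1
            else if t ! 1 \<noteq> 2 \<and> t ! 2 \<noteq> 2 then 0
            else t ! 0)"

definition psi_enc :: "nat list set" where
  "psi_enc = {[a,b,c,d,e,f] | a b c d e f. {a,b,c,d,e,f} \<subseteq> D3 \<and>
     [a,d] \<in> psi2 \<and> [b,f] \<in> rho2 \<and> [c,e] \<in> rho2}"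

definition rho_enc :: "nat list set" where
  "rho_enc = {[a,b,c,d,e,f] | a b c d e f. {a,b,c,d,e,f} \<subseteq> D3 \<and> [a,d] \<in> rho2}"

definition tau0_enc :: "nat list set" where
  "tau0_enc = {[a,b,c,d,e,e] | a b c d e. {a,b,c,d,e} \<subseteq> D3 \<and>
     d \<in> {0,1} \<and> (a = 2 \<longleftrightarrow> e = 2)}"

definition tau1_enc :: "nat list set" where
  "tau1_enc = {[a,b,c,d,e,e] | a b c d e. {a,b,c,d,e} \<subseteq> D3 \<and>
     d \<in> {0,1} \<and> (a = 2 \<longleftrightarrow> e \<noteq> 2)}"

definition zero_one_enc :: "nat list set" where
  "zero_one_enc = {[a,b,c] | a b c. {a,b,c} \<subseteq> D3 \<and> a \<in> {0,1}}"

definition two_enc :: "nat list set" where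
  "two_enc = {[2,b,c] | b c. {b,c} \<subseteq> D3}"

definition M0'_cube_rels :: "(nat \<times> nat list set) list" where
  "M0'_cube_rels = [(2, psi_enc), (2, rho_enc), (2, tau0_enc), (2, tau1_enc),
     (1, zero_one_enc), (1, {enc 0}), (1, {enc 1}), (1, two_enc)]"

lemma pp_definable_psi_enc: "pp_definable M0 6 psi_enc"
  by (rule pp_definable_by_formula[where d = 0 and xs = "[0,1,2,3,4,5]" and
        \<phi> = "PConj (PAtom 0 [0,3]) (PConj (PAtom 1 [1,5]) (PAtom 1 [2,4]))"])
    (auto simp: psi_enc_def fst_M0 M0_def D3_members)

lemma pp_definable_rho_enc: "pp_definable M0 6 rho_enc"
  by (rule pp_definable_by_formula[where d = 0 and xs = "[0,1,2,3,4,5]" and \<phi> = "PAtom 1 [0,3]"])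
    (auto simp: rho_enc_def fst_M0 M0_def D3_members)

lemma pp_definable_tau0_enc: "pp_definable M0 6 tau0_enc"
proof (rule pp_definable_by_formula[where d = 0 and xs = "[0,1,2,3,4,5]" and
      \<phi> = "PConj (PAtom 2 [3]) (PConj (PEq 4 5) (PEx 6 (PConj (PAtom 1 [0,6]) (PAtom 1 [6,4]))))"])
  fix v :: "nat \<Rightarrow> nat" assume "\<forall>y. v y \<in> fst M0"
  then have "v y \<in> D3" for y by (simp add: fst_M0)
  then show "pp_sat M0 (PConj (PAtom 2 [3])
      (PConj (PEq 4 5) (PEx 6 (PConj (PAtom 1 [0,6]) (PAtom 1 [6,4]))))) v
    \<longleftrightarrow> map v [0,1,2,3,4,5] \<in> tau0_enc"
    by (auto simp: tau0_enc_def M0_def unrel_def rho2_rho2_iff)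
qed (auto simp: tau0_enc_def fst_M0 D3_members)

lemma pp_definable_tau1_enc: "pp_definable M0 6 tau1_enc"
  by (rule pp_definable_by_formula[where d = 0 and xs = "[0,1,2,3,4,5]" and
        \<phi> = "PConj (PAtom 2 [3]) (PConj (PEq 4 5) (PAtom 1 [0,4]))"])
    (auto simp: tau1_enc_def fst_M0 M0_def D3_members unrel_def rho2_iff)

lemma pp_definable_zero_one_enc: "pp_definable M0 3 zero_one_enc"
  by (rule pp_definable_by_formula[where d = 0 and xs = "[0,1,2]" and \<phi> = "PAtom 2 [0]"])
    (auto simp: zero_one_enc_def fst_M0 M0_def D3_members unrel_def)

lemma pp_definable_two_enc: "pp_definable M0 3 two_enc"
  by (rule pp_definable_by_formula[where d = 0 and xs = "[0,1,2]" and \<phi> = "PAtom 5 [0]"])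
    (auto simp: two_enc_def fst_M0 M0_def D3_def unrel_def)

lemma pp_definable_enc_0: "pp_definable M0 3 {enc 0}"
  by (rule pp_definable_by_formula[where d = 0 and xs = "[0,1,2]" and
        \<phi> = "PConj (PAtom 3 [0]) (PConj (PAtom 3 [1]) (PAtom 3 [2]))"])
    (auto simp: enc_def fst_M0 M0_def D3_def unrel_def)

lemma pp_definable_enc_1: "pp_definable M0 3 {enc 1}"
  by (rule pp_definable_by_formula[where d = 0 and xs = "[0,1,2]" and
        \<phi> = "PConj (PAtom 4 [0]) (PConj (PAtom 5 [1]) (PAtom 5 [2]))"])
    (auto simp: enc_def fst_M0 M0_def D3_def unrel_def)

lemma M0'_cube_rels_pp_definable: "\<forall>(k, R)\<in>set M0'_cube_rels. pp_definable M0 (k * 3) R"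
  using pp_definable_psi_enc pp_definable_rho_enc pp_definable_tau0_enc
        pp_definable_tau1_enc pp_definable_zero_one_enc pp_definable_enc_0 pp_definable_enc_1
        pp_definable_two_enc
  by (simp add: M0'_cube_rels_def)

lemma length_enc [simp]: "length (enc x) = 3"
  by (simp add: enc_def)

lemma is_hom_enc: "is_hom enc M0' (pp_power_of M0 3 M0'_cube_rels)"
  unfolding is_hom_iff_list_all2
  by (simp add: M0'_def pp_power_of_def M0'_cube_rels_def map_in_unconcat_iff fst_M0)
    (auto simp: enc_def D3_def psi2_def rho2_eq tau0_def tau1_def unrel_def psi_enc_def rho_enc_def
      tau0_enc_def tau1_enc_def zero_one_enc_def two_enc_def)

lemma dec_eq_2_iff: "dec [a,b,c] = 2 \<longleftrightarrow> a = 2"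
  by (simp add: dec_def)

lemma dec_in_D3: "a \<in> D3 \<Longrightarrow> dec [a,b,c] \<in> D3"
  by (auto simp: dec_def D3_def)

lemma dec_in_01: "a \<in> D3 \<Longrightarrow> a \<noteq> 2 \<Longrightarrow> dec [a,b,c] \<in> {0,1}"
  by (auto simp: dec_def D3_def)

lemma dec_bit: "a \<noteq> 2 \<Longrightarrow> dec [a,e,e] = (if e = 2 then 1 else 0)"
  by (simp add: dec_def)

lemma dec_enc: "x \<in> D3 \<Longrightarrow> dec (enc x) = x"
  by (auto simp: dec_def enc_def D3_def)

lemma dec_psi_enc: "[a,b,c,d,e,f] \<in> psi_enc \<Longrightarrow> [dec [a,b,c], dec [d,e,f]] \<in> psi2"
  unfolding psi_enc_def psi2_def by (auto simp: dec_def rho2_iff)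

lemma dec_rho_enc: "[a,b,c,d,e,f] \<in> rho_enc \<Longrightarrow> [dec [a,b,c], dec [d,e,f]] \<in> rho2"
  unfolding rho_enc_def rho2_iff by (simp add: dec_eq_2_iff dec_in_D3)

lemma dec_tau0_enc:
  assumes "[a,b,c,d,e,f] \<in> tau0_enc"
  shows "[dec [a,b,c], dec [d,e,f]] \<in> tau0"
proof -
  from assms have "f = e" "a \<in> D3" "d \<in> {0,1}" "a = 2 \<longleftrightarrow> e = 2"
    unfolding tau0_enc_def by auto
  then show ?thesis
    using dec_in_01[of a b c] by (auto simp: tau0_def dec_bit dec_eq_2_iff)
qed

lemma dec_tau1_enc:
  assumes "[a,b,c,d,e,f] \<in> tau1_enc"
  shows "[dec [a,b,c], dec [d,e,f]] \<in> tau1"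
proof -
  from assms have "f = e" "a \<in> D3" "d \<in> {0,1}" "a = 2 \<longleftrightarrow> e \<noteq> 2"
    unfolding tau1_enc_def by auto
  then show ?thesis
    using dec_in_01[of a b c] by (auto simp: tau1_def dec_bit dec_eq_2_iff)
qed

lemma dec_zero_one_enc:
  assumes "[a,b,c] \<in> zero_one_enc"
  shows "[dec [a,b,c]] \<in> unrel {0,1}"
proof -
  have "a \<in> D3" "a \<noteq> 2" using assms by (auto simp: zero_one_enc_def)
  then show ?thesis unfolding singleton_in_unrel_iff by (rule dec_in_01)
qed

lemma is_hom_dec: "is_hom dec (pp_power_of M0 3 M0'_cube_rels) M0'"
  unfolding is_hom_iff_list_all2
proof (intro conjI)
  show "\<forall>t\<in>fst (pp_power_of M0 3 M0'_cube_rels). dec t \<in> fst M0'"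
    by (auto simp: pp_power_of_def fst_M0 M0'_def length_eq_3_iff dec_in_D3)
  show "list_all2 (\<lambda>(k, R) (k', R'). k = k' \<and> (\<forall>t\<in>R. map dec t \<in> R'))
     (snd (pp_power_of M0 3 M0'_cube_rels)) (snd M0')"
    unfolding M0'_def pp_power_of_def M0'_cube_rels_def list.map prod.case unconcat_3_1 unconcat_3_2
    \<comment> \<open>without One_nat_def, the arity 1 and the set {0,1} keep the form used in the lemmas above\<close>
    by (auto simp: dec_psi_enc dec_rho_enc dec_tau0_enc dec_tau1_enc dec_zero_one_enc
      dec_enc D3_members unrel_singleton two_enc_def dec_eq_2_iff simp del: One_nat_def)
qed

lemma M0_pp_constructs_M0': "pp_constructs M0 M0'"
  using pp_constructs_via_pp_power_of[OF _ M0'_cube_rels_pp_definable is_hom_enc is_hom_dec] by simp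

lemma M0'_pp_constructs_M0: "pp_constructs M0' M0"
proof (rule pp_constructs_if_pp_definable)
  have "pp_definable M0' k R" if "(k, R) \<in> set (snd M0)" for k R
    using that by (intro pp_definable_atom[where d = 0])
      (auto simp: M0_def M0'_def D3_def psi2_def rho2_eq unrel_def)
  then show "\<forall>(k, R)\<in>set (snd M0). pp_definable M0' k R" by blast
qed (simp add: M0_def M0'_def)

theorem lemma6p5:
  shows "pp_constructs M0 M0' \<and> pp_constructs M0' M0"
  by (rule conjI[OF M0_pp_constructs_M0' M0'_pp_constructs_M0])

end
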